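(* Let $d\ge 3$ and let $\mathbf X=(X_1,\dots,X_d)$ be a random vector of real-valued random variables on an atomless probability space (no integrability assumed), at least $3$ of whose components are non-degenerate. If a counter-monotonic version $\mathbf X^{\rm ct}$ of $\mathbf X$ exists, then $\mathbf X^{\rm ct}\le_{\rm sm}\mathbf X$.
   Context: A function $\varphi:\mathbb R^d\to\mathbb R$ is supermodular if $\varphi(\mathbf x)+\varphi(\mathbf y)\le\varphi(\mathbf x\wedge\mathbf y)+\varphi(\mathbf x\vee\mathbf y)$ for all $\mathbf x,\mathbf y\in\mathbb R^d$, where $\wedge,\vee$ are componentwise minimum and maximum. An expectation $\mathbb E[V]$ is well-defined if $\mathbb E[\max\{V,0\}]<\infty$ or $\mathbb E[\max\{-V,0\}]<\infty$. For random vectors $\mathbf X,\mathbf Y$ in $\mathbb R^d$, $\mathbf X\le_{\rm sm}\mathbf Y$ means $\mathbb E[\varphi(\mathbf X)]\le\mathbb E[\varphi(\mathbf Y)]$ for all supermodular $\varphi$ such that both expectations are well-defined. A pair $(X,Y)$ is comonotonic if $X=f(Z)$, $Y=g(Z)$ a.s. for some random variable $Z$ and increasing $f,g$, and counter-monotonic if $(X,-Y)$ is comonotonic; a random vector is counter-monotonic if each pair of its components is. A counter-monotonic version of $\mathbf X$ is a counter-monotonic random vector with the same marginal distributions as $\mathbf X$. *)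

theory Defs
  imports "HOL-Probability.Probability"
begin

definition atomless :: "'a measure \<Rightarrow> bool" where
  "atomless M \<longleftrightarrow> (\<forall>A\<in>sets M. 0 < emeasure M A \<longrightarrow>
     (\<exists>B\<in>sets M. B \<subseteq> A \<and> 0 < emeasure M B \<and> emeasure M B < emeasure M A))"

definition nondegenerate :: "'a measure \<Rightarrow> ('a \<Rightarrow> real) \<Rightarrow> bool" where
  "nondegenerate M V \<longleftrightarrow> \<not> (\<exists>c. AE \<omega> in M. V \<omega> = c)"

text \<open>Supermodular function on R^d (vectors indexed by a finite type 'd);
  inf / sup on functions are the componentwise minimum / maximum.\<close>
definition supermodular :: "(('d \<Rightarrow> real) \<Rightarrow> real) \<Rightarrow> bool" where
  "supermodular \<phi> \<longleftrightarrow> (\<forall>x y. \<phi> x + \<phi> y \<le> \<phi> (inf x y) + \<phi> (sup x y))"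

definition exp_well_defined :: "'a measure \<Rightarrow> ('a \<Rightarrow> real) \<Rightarrow> bool" where
  "exp_well_defined M V \<longleftrightarrow>
     (\<integral>\<^sup>+\<omega>. ennreal (max (V \<omega>) 0) \<partial>M) < \<infinity> \<or> (\<integral>\<^sup>+\<omega>. ennreal (max (- V \<omega>) 0) \<partial>M) < \<infinity>"

text \<open>Extended-real expectation E[V] = E[max(V,0)] - E[max(-V,0)]
  (meaningful when well-defined).\<close>
definition ext_expectation :: "'a measure \<Rightarrow> ('a \<Rightarrow> real) \<Rightarrow> ereal" where
  "ext_expectation M V =
     enn2ereal (\<integral>\<^sup>+\<omega>. ennreal (max (V \<omega>) 0) \<partial>M) - enn2ereal (\<integral>\<^sup>+\<omega>. ennreal (max (- V \<omega>) 0) \<partial>M)"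

definition comonotonic :: "'a measure \<Rightarrow> ('a \<Rightarrow> real) \<Rightarrow> ('a \<Rightarrow> real) \<Rightarrow> bool" where
  "comonotonic M X Y \<longleftrightarrow> (\<exists>(Z::'a \<Rightarrow> real) (f::real \<Rightarrow> real) (g::real \<Rightarrow> real).
     Z \<in> borel_measurable M \<and> mono f \<and> mono g \<and> (AE \<omega> in M. X \<omega> = f (Z \<omega>) \<and> Y \<omega> = g (Z \<omega>)))"

definition counter_monotonic_pair :: "'a measure \<Rightarrow> ('a \<Rightarrow> real) \<Rightarrow> ('a \<Rightarrow> real) \<Rightarrow> bool" where
  "counter_monotonic_pair M X Y \<longleftrightarrow> comonotonic M X (\<lambda>\<omega>. - Y \<omega>)"

definition counter_monotonic :: "'a measure \<Rightarrow> ('d \<Rightarrow> 'a \<Rightarrow> real) \<Rightarrow> bool" where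
  "counter_monotonic M Y \<longleftrightarrow> (\<forall>i j. i \<noteq> j \<longrightarrow> counter_monotonic_pair M (Y i) (Y j))"

definition counter_monotonic_version :: "'a measure \<Rightarrow> ('d \<Rightarrow> 'a \<Rightarrow> real) \<Rightarrow> ('d \<Rightarrow> 'a \<Rightarrow> real) \<Rightarrow> bool" where
  "counter_monotonic_version M Y X \<longleftrightarrow>
     (\<forall>i. Y i \<in> borel_measurable M) \<and> counter_monotonic M Y \<and>
     (\<forall>i. distr M borel (Y i) = distr M borel (X i))"

definition sm_le :: "'a measure \<Rightarrow> ('d::finite \<Rightarrow> 'a \<Rightarrow> real) \<Rightarrow> ('d \<Rightarrow> 'a \<Rightarrow> real) \<Rightarrow> bool" where
  "sm_le M X Y \<longleftrightarrow> (\<forall>\<phi> :: ('d \<Rightarrow> real) \<Rightarrow> real.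
     supermodular \<phi> \<and> \<phi> \<in> borel_measurable borel \<and>
     exp_well_defined M (\<lambda>\<omega>. \<phi> (\<lambda>i. X i \<omega>)) \<and> exp_well_defined M (\<lambda>\<omega>. \<phi> (\<lambda>i. Y i \<omega>)) \<longrightarrow>
     ext_expectation M (\<lambda>\<omega>. \<phi> (\<lambda>i. X i \<omega>)) \<le> ext_expectation M (\<lambda>\<omega>. \<phi> (\<lambda>i. Y i \<omega>)))"

end

theory Submission
  imports Defs
begin

(* A counter-monotonic random vector almost surely takes its values in a set R of points any two
   of which satisfy (p i - q i) * (p j - q j) \<le> 0 for all i \<noteq> j. If three coordinates are not
   constant on R, then there is a point c such that every point of R differs from c in at most one
   coordinate and R lies entirely above c or entirely below c. For such points the sum of the
   one-coordinate increments of a function \<phi> at c recovers \<phi> exactly, whereas for a supermodular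
   \<phi> it only bounds \<phi> from below at points comparable with c. Since X has the same marginals as
   its counter-monotonic version, it is also almost surely comparable with c, and the expectation
   of the increment sum depends on the marginals alone. *)

lemma ext_expectation_mono_AE:
  assumes "AE \<omega> in M. f \<omega> \<le> g \<omega>"
  shows "ext_expectation M f \<le> ext_expectation M g"
proof -
  have "(\<integral>\<^sup>+\<omega>. ennreal (max (f \<omega>) 0) \<partial>M) \<le> (\<integral>\<^sup>+\<omega>. ennreal (max (g \<omega>) 0) \<partial>M)"
    and "(\<integral>\<^sup>+\<omega>. ennreal (max (- g \<omega>) 0) \<partial>M) \<le> (\<integral>\<^sup>+\<omega>. ennreal (max (- f \<omega>) 0) \<partial>M)"
    using assms by (auto elim!: eventually_mono intro!: nn_integral_mono_AE ennreal_leI)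
  then show ?thesis
    unfolding ext_expectation_def by (intro ereal_minus_mono) (simp_all only: less_eq_ennreal.rep_eq)
qed

lemma ext_expectation_cong_AE:
  assumes "AE \<omega> in M. f \<omega> = g \<omega>"
  shows "ext_expectation M f = ext_expectation M g"
  using assms by (intro antisym ext_expectation_mono_AE) (auto elim!: eventually_mono)

lemma ext_expectation_eq_MInf:
  assumes "exp_well_defined M V" and "(\<integral>\<^sup>+\<omega>. ennreal (max (- V \<omega>) 0) \<partial>M) = \<infinity>"
  shows "ext_expectation M V = - \<infinity>"
proof -
  have "(\<integral>\<^sup>+\<omega>. ennreal (max (V \<omega>) 0) \<partial>M) < \<infinity>"
    using assms unfolding exp_well_defined_def by auto
  then obtain r where "enn2ereal (\<integral>\<^sup>+\<omega>. ennreal (max (V \<omega>) 0) \<partial>M) = ereal r"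
    by (cases "enn2ereal (\<integral>\<^sup>+\<omega>. ennreal (max (V \<omega>) 0) \<partial>M)") (auto simp: infinity_ennreal_def)
  then show ?thesis
    unfolding ext_expectation_def assms(2) by (simp add: infinity_ennreal_def)
qed

lemma ext_expectation_eq_diff:
  fixes F :: "'a \<Rightarrow> real" and G H :: "'a \<Rightarrow> ennreal"
  assumes F: "F \<in> borel_measurable M" and G: "G \<in> borel_measurable M" and H: "H \<in> borel_measurable M"
    and eq: "\<And>\<omega>. \<omega> \<in> space M \<Longrightarrow> ennreal (max (F \<omega>) 0) + H \<omega> = G \<omega> + ennreal (max (- F \<omega>) 0)"
    and le: "\<And>\<omega>. \<omega> \<in> space M \<Longrightarrow> ennreal (max (- F \<omega>) 0) \<le> H \<omega>"
    and fin: "(\<integral>\<^sup>+\<omega>. H \<omega> \<partial>M) < \<infinity>"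
  shows "ext_expectation M F = enn2ereal (\<integral>\<^sup>+\<omega>. G \<omega> \<partial>M) - enn2ereal (\<integral>\<^sup>+\<omega>. H \<omega> \<partial>M)"
proof -
  define A where "A = (\<integral>\<^sup>+\<omega>. ennreal (max (F \<omega>) 0) \<partial>M)"
  define B where "B = (\<integral>\<^sup>+\<omega>. ennreal (max (- F \<omega>) 0) \<partial>M)"
  define GG where "GG = (\<integral>\<^sup>+\<omega>. G \<omega> \<partial>M)"
  define HH where "HH = (\<integral>\<^sup>+\<omega>. H \<omega> \<partial>M)"
  have "A + HH = (\<integral>\<^sup>+\<omega>. ennreal (max (F \<omega>) 0) + H \<omega> \<partial>M)"
    unfolding A_def HH_def using F H by (subst nn_integral_add) auto
  also have "\<dots> = (\<integral>\<^sup>+\<omega>. G \<omega> + ennreal (max (- F \<omega>) 0) \<partial>M)"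
    by (rule nn_integral_cong) (use eq in auto)
  also have "\<dots> = GG + B"
    unfolding GG_def B_def using F G by (subst nn_integral_add) auto
  finally have sum_eq: "A + HH = GG + B" .
  have "B \<le> HH"
    unfolding B_def HH_def by (rule nn_integral_mono) (use le in auto)
  then obtain b h where b: "B = ennreal b" "0 \<le> b" and h: "HH = ennreal h" "0 \<le> h"
    using fin unfolding HH_def[symmetric]
    by (metis ennreal_cases ennreal_less_top infinity_ennreal_def order.strict_trans1 top.not_eq_extremum)
  have "enn2ereal A + ereal h = enn2ereal GG + ereal b"
    using arg_cong[OF sum_eq, of enn2ereal] b h by (simp add: plus_ennreal.rep_eq)
  then have "enn2ereal A - ereal b = enn2ereal GG - ereal h"
    by (cases "enn2ereal A"; cases "enn2ereal GG") auto
  then show ?thesis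
    unfolding ext_expectation_def A_def[symmetric] B_def[symmetric] GG_def[symmetric] HH_def[symmetric]
    using b h by simp
qed

lemma ennreal_parts_shift:
  fixes a P N :: real
  assumes "0 \<le> P" "0 \<le> N"
  shows "ennreal (max (a + (P - N)) 0) + ennreal (max (- a) 0 + N) =
      ennreal (max a 0 + P) + ennreal (max (- (a + (P - N))) 0)"
    and "ennreal (max (- (a + (P - N))) 0) \<le> ennreal (max (- a) 0 + N)"
proof -
  have "ennreal (max (a + (P - N)) 0) + ennreal (max (- a) 0 + N) =
      ennreal (max (a + (P - N)) 0 + (max (- a) 0 + N))"
    using \<open>0 \<le> N\<close> by (intro ennreal_plus[symmetric]) auto
  also have "\<dots> = ennreal ((max a 0 + P) + max (- (a + (P - N))) 0)"
    by (rule arg_cong[where f = ennreal]) (simp add: max_def)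
  also have "\<dots> = ennreal (max a 0 + P) + ennreal (max (- (a + (P - N))) 0)"
    using \<open>0 \<le> P\<close> by (intro ennreal_plus) auto
  finally show "ennreal (max (a + (P - N)) 0) + ennreal (max (- a) 0 + N) =
      ennreal (max a 0 + P) + ennreal (max (- (a + (P - N))) 0)" .
  show "ennreal (max (- (a + (P - N))) 0) \<le> ennreal (max (- a) 0 + N)"
    using assms by (intro ennreal_leI) (simp add: max_def)
qed

lemma nn_integral_const_add_sum:
  fixes f :: "'i \<Rightarrow> 'a \<Rightarrow> ennreal"
  assumes "prob_space M" and "\<And>l. l \<in> I \<Longrightarrow> f l \<in> borel_measurable M"
  shows "(\<integral>\<^sup>+\<omega>. b + (\<Sum>l\<in>I. f l \<omega>) \<partial>M) = b + (\<Sum>l\<in>I. \<integral>\<^sup>+\<omega>. f l \<omega> \<partial>M)"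
  using assms by (subst nn_integral_add) (auto simp: prob_space.emeasure_space_1 intro!: nn_integral_sum)

lemma ext_expectation_offset_sum:
  fixes F :: "'i \<Rightarrow> 'a \<Rightarrow> real"
  assumes "prob_space M" and "finite I"
    and F: "\<And>l. l \<in> I \<Longrightarrow> F l \<in> borel_measurable M"
    and fin: "\<And>l. l \<in> I \<Longrightarrow> (\<integral>\<^sup>+\<omega>. ennreal (max (- F l \<omega>) 0) \<partial>M) < \<infinity>"
  shows "ext_expectation M (\<lambda>\<omega>. a + (\<Sum>l\<in>I. F l \<omega>)) =
     enn2ereal (ennreal (max a 0) + (\<Sum>l\<in>I. \<integral>\<^sup>+\<omega>. ennreal (max (F l \<omega>) 0) \<partial>M)) -
     enn2ereal (ennreal (max (- a) 0) + (\<Sum>l\<in>I. \<integral>\<^sup>+\<omega>. ennreal (max (- F l \<omega>) 0) \<partial>M))"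
proof -
  have parts_sum: "ennreal (max b 0) + (\<Sum>l\<in>I. ennreal (max (V l) 0)) =
      ennreal (max b 0 + (\<Sum>l\<in>I. max (V l) 0))" for b and V :: "'i \<Rightarrow> real"
  proof -
    have "(\<Sum>l\<in>I. ennreal (max (V l) 0)) = ennreal (\<Sum>l\<in>I. max (V l) 0)"
      by (rule sum_ennreal) simp
    then show ?thesis
      by (subst ennreal_plus) (auto intro: sum_nonneg)
  qed
  define G where "G \<omega> = ennreal (max a 0) + (\<Sum>l\<in>I. ennreal (max (F l \<omega>) 0))" for \<omega>
  define H where "H \<omega> = ennreal (max (- a) 0) + (\<Sum>l\<in>I. ennreal (max (- F l \<omega>) 0))" for \<omega>
  have "ext_expectation M (\<lambda>\<omega>. a + (\<Sum>l\<in>I. F l \<omega>)) = enn2ereal (\<integral>\<^sup>+\<omega>. G \<omega> \<partial>M) - enn2ereal (\<integral>\<^sup>+\<omega>. H \<omega> \<partial>M)"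
  proof (rule ext_expectation_eq_diff)
    show "(\<lambda>\<omega>. a + (\<Sum>l\<in>I. F l \<omega>)) \<in> borel_measurable M" "G \<in> borel_measurable M" "H \<in> borel_measurable M"
      unfolding G_def H_def using F by auto
    show "(\<integral>\<^sup>+\<omega>. H \<omega> \<partial>M) < \<infinity>"
      unfolding H_def using F fin \<open>finite I\<close>
      by (subst nn_integral_const_add_sum[OF assms(1)]) (auto simp: less_top[symmetric])
  next
    fix \<omega>
    define P where "P = (\<Sum>l\<in>I. max (F l \<omega>) 0)"
    define N where "N = (\<Sum>l\<in>I. max (- F l \<omega>) 0)"
    have "0 \<le> P" "0 \<le> N"
      unfolding P_def N_def by (auto intro: sum_nonneg)
    have sum_eq: "(\<Sum>l\<in>I. F l \<omega>) = P - N"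
      unfolding P_def N_def sum_subtractf[symmetric] by (rule sum.cong) auto
    have GH: "G \<omega> = ennreal (max a 0 + P)" "H \<omega> = ennreal (max (- a) 0 + N)"
      unfolding G_def H_def P_def N_def by (rule parts_sum)+
    show "ennreal (max (a + (\<Sum>l\<in>I. F l \<omega>)) 0) + H \<omega> =
        G \<omega> + ennreal (max (- (a + (\<Sum>l\<in>I. F l \<omega>))) 0)"
      and "ennreal (max (- (a + (\<Sum>l\<in>I. F l \<omega>))) 0) \<le> H \<omega>"
      unfolding sum_eq GH using ennreal_parts_shift[OF \<open>0 \<le> P\<close> \<open>0 \<le> N\<close>, of a] by simp_all
  qed
  also have "\<dots> = enn2ereal (ennreal (max a 0) + (\<Sum>l\<in>I. \<integral>\<^sup>+\<omega>. ennreal (max (F l \<omega>) 0) \<partial>M)) -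
     enn2ereal (ennreal (max (- a) 0) + (\<Sum>l\<in>I. \<integral>\<^sup>+\<omega>. ennreal (max (- F l \<omega>) 0) \<partial>M))"
    unfolding G_def H_def using F
    by (intro arg_cong2[where f = "\<lambda>x y. enn2ereal x - enn2ereal y"] nn_integral_const_add_sum[OF assms(1)]) auto
  finally show ?thesis .
qed

lemma nn_integral_comp_distr_eq:
  fixes g :: "'b::topological_space \<Rightarrow> ennreal"
  assumes "Z \<in> borel_measurable M" "Z' \<in> borel_measurable M" "distr M borel Z = distr M borel Z'"
    and "g \<in> borel_measurable borel"
  shows "(\<integral>\<^sup>+\<omega>. g (Z \<omega>) \<partial>M) = (\<integral>\<^sup>+\<omega>. g (Z' \<omega>) \<partial>M)"
  using assms by (simp add: nn_integral_distr[symmetric])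

lemma ext_expectation_offset_sum_distr_eq:
  fixes Z Z' :: "'i \<Rightarrow> 'a \<Rightarrow> real" and u :: "'i \<Rightarrow> real \<Rightarrow> real"
  assumes "prob_space M" and "finite I"
    and Z: "\<And>l. Z l \<in> borel_measurable M" and Z': "\<And>l. Z' l \<in> borel_measurable M"
    and distr_eq: "\<And>l. distr M borel (Z l) = distr M borel (Z' l)"
    and u: "\<And>l. u l \<in> borel_measurable borel"
    and fin: "\<And>l. (\<integral>\<^sup>+\<omega>. ennreal (max (- u l (Z l \<omega>)) 0) \<partial>M) < \<infinity>"
  shows "ext_expectation M (\<lambda>\<omega>. a + (\<Sum>l\<in>I. u l (Z l \<omega>))) =
    ext_expectation M (\<lambda>\<omega>. a + (\<Sum>l\<in>I. u l (Z' l \<omega>)))"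
proof -
  have parts_eq: "(\<integral>\<^sup>+\<omega>. ennreal (max (s * u l (Z l \<omega>)) 0) \<partial>M) =
      (\<integral>\<^sup>+\<omega>. ennreal (max (s * u l (Z' l \<omega>)) 0) \<partial>M)" for s l
    using u by (intro nn_integral_comp_distr_eq[OF Z Z' distr_eq, of "\<lambda>t. ennreal (max (s * u l t) 0)"]) simp
  have fin': "(\<integral>\<^sup>+\<omega>. ennreal (max (- u l (Z' l \<omega>)) 0) \<partial>M) < \<infinity>" for l
    using fin[of l] parts_eq[of "-1" l] by simp
  show ?thesis
    using parts_eq[of 1] parts_eq[of "-1"] u Z Z' fin fin'
    by (simp add: ext_expectation_offset_sum[OF assms(1,2)])
qed

definition single_deviation :: "('d \<Rightarrow> 'b) \<Rightarrow> ('d \<Rightarrow> 'b) \<Rightarrow> bool" where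
  "single_deviation c x \<longleftrightarrow> (\<exists>i. x = c(i := x i))"

lemma single_deviation_increments:
  fixes \<phi> :: "('d::finite \<Rightarrow> real) \<Rightarrow> real"
  assumes "single_deviation c x"
  shows "\<phi> c + (\<Sum>l\<in>UNIV. \<phi> (c(l := x l)) - \<phi> c) = \<phi> x"
    and "max (- (\<phi> (c(l := x l)) - \<phi> c)) 0 \<le> max (- \<phi> x) 0 + \<bar>\<phi> c\<bar>"
proof -
  obtain i where i: "x = c(i := x i)"
    using assms unfolding single_deviation_def by blast
  have other: "c(l := x l) = c" if "l \<noteq> i" for l
    using that by (subst i) simp
  have "(\<Sum>l\<in>UNIV. \<phi> (c(l := x l)) - \<phi> c) = (\<Sum>l\<in>UNIV. if l = i then \<phi> x - \<phi> c else 0)"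
    using other i[symmetric] by (intro sum.cong) auto
  then show "\<phi> c + (\<Sum>l\<in>UNIV. \<phi> (c(l := x l)) - \<phi> c) = \<phi> x"
    by simp
  show "max (- (\<phi> (c(l := x l)) - \<phi> c)) 0 \<le> max (- \<phi> x) 0 + \<bar>\<phi> c\<bar>"
    using other[of l] i[symmetric] by (cases "l = i") auto
qed

lemma supermodular_sum_increments_le:
  fixes \<phi> :: "('d \<Rightarrow> real) \<Rightarrow> real"
  assumes sm: "supermodular \<phi>" and comparable: "c \<le> x \<or> x \<le> c" and "finite S"
  shows "\<phi> c + (\<Sum>i\<in>S. \<phi> (c(i := x i)) - \<phi> c) \<le> \<phi> (\<lambda>i. if i \<in> S then x i else c i)"
  using \<open>finite S\<close>
proof (induction S rule: finite_induct)
  case empty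
  then show ?case by simp
next
  case (insert j S)
  define z where "z = (\<lambda>i. if i \<in> S then x i else c i)"
  define w where "w = c(j := x j)"
  define n where "n = (\<lambda>i. if i \<in> insert j S then x i else c i)"
  from comparable have "inf z w = c \<and> sup z w = n \<or> inf z w = n \<and> sup z w = c"
  proof
    assume "c \<le> x"
    then show ?thesis
      using \<open>j \<notin> S\<close> unfolding z_def w_def n_def le_fun_def
      by (intro disjI1 conjI ext) (auto simp: inf_fun_def sup_fun_def inf_min sup_max)
  next
    assume "x \<le> c"
    then show ?thesis
      using \<open>j \<notin> S\<close> unfolding z_def w_def n_def le_fun_def
      by (intro disjI2 conjI ext) (auto simp: inf_fun_def sup_fun_def inf_min sup_max)
  qed
  then have "\<phi> z + \<phi> w \<le> \<phi> c + \<phi> n"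
    using sm unfolding supermodular_def by (metis add.commute)
  moreover have "(\<Sum>i\<in>insert j S. \<phi> (c(i := x i)) - \<phi> c) = (\<phi> w - \<phi> c) + (\<Sum>i\<in>S. \<phi> (c(i := x i)) - \<phi> c)"
    using insert.hyps unfolding w_def by simp
  ultimately show ?case
    using insert.IH unfolding z_def[symmetric] n_def[symmetric] by linarith
qed

lemma borel_measurable_fun_upd: "(\<lambda>t. c(l := t)) \<in> borel_measurable borel" for c :: "'d::finite \<Rightarrow> real"
proof (rule borel_measurable_continuous_onI, rule continuous_on_coordinatewise_then_product)
  fix m
  show "continuous_on UNIV (\<lambda>t. (c(l := t)) m)"
    by (cases "m = l") auto
qed

lemma borel_measurable_components:
  fixes Y :: "'d::finite \<Rightarrow> 'a \<Rightarrow> real"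
  assumes "\<And>l. Y l \<in> borel_measurable M"
  shows "(\<lambda>\<omega> l. Y l \<omega>) \<in> borel_measurable M"
  using assms by (intro measurable_coordinatewise_then_product)

lemma nn_integral_neg_increment_finite:
  fixes Y :: "'d::finite \<Rightarrow> 'a \<Rightarrow> real" and \<phi> :: "('d \<Rightarrow> real) \<Rightarrow> real"
  assumes "prob_space M" and Y: "\<And>l. Y l \<in> borel_measurable M" and \<phi>: "\<phi> \<in> borel_measurable borel"
    and single: "AE \<omega> in M. single_deviation c (\<lambda>l. Y l \<omega>)"
    and fin: "(\<integral>\<^sup>+\<omega>. ennreal (max (- \<phi> (\<lambda>l. Y l \<omega>)) 0) \<partial>M) < \<infinity>"
  shows "(\<integral>\<^sup>+\<omega>. ennreal (max (- (\<phi> (c(l := Y l \<omega>)) - \<phi> c)) 0) \<partial>M) < \<infinity>"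
proof -
  interpret prob_space M by fact
  have "(\<lambda>\<omega>. \<phi> (\<lambda>l. Y l \<omega>)) \<in> borel_measurable M"
    using measurable_compose[OF borel_measurable_components[OF Y] \<phi>] by simp
  have "(\<integral>\<^sup>+\<omega>. ennreal (max (- (\<phi> (c(l := Y l \<omega>)) - \<phi> c)) 0) \<partial>M) \<le>
      (\<integral>\<^sup>+\<omega>. ennreal (max (- \<phi> (\<lambda>l. Y l \<omega>)) 0) + ennreal \<bar>\<phi> c\<bar> \<partial>M)"
    using single
  proof (intro nn_integral_mono_AE, eventually_elim)
    case (elim \<omega>)
    then have "max (- (\<phi> (c(l := Y l \<omega>)) - \<phi> c)) 0 \<le> max (- \<phi> (\<lambda>l. Y l \<omega>)) 0 + \<bar>\<phi> c\<bar>"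
      using single_deviation_increments(2)[of c "\<lambda>l. Y l \<omega>" \<phi> l] by simp
    then have "ennreal (max (- (\<phi> (c(l := Y l \<omega>)) - \<phi> c)) 0) \<le>
        ennreal (max (- \<phi> (\<lambda>l. Y l \<omega>)) 0 + \<bar>\<phi> c\<bar>)"
      by (rule ennreal_leI)
    then show ?case
      by (simp add: ennreal_plus)
  qed
  also have "\<dots> = (\<integral>\<^sup>+\<omega>. ennreal (max (- \<phi> (\<lambda>l. Y l \<omega>)) 0) \<partial>M) + ennreal \<bar>\<phi> c\<bar>"
    using \<open>(\<lambda>\<omega>. \<phi> (\<lambda>l. Y l \<omega>)) \<in> borel_measurable M\<close>
    by (subst nn_integral_add) (auto simp: emeasure_space_1)
  also have "\<dots> < \<infinity>"
    using fin by (simp add: less_top[symmetric])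
  finally show ?thesis .
qed

lemma supermodular_ext_expectation_le:
  fixes X Y :: "'d::finite \<Rightarrow> 'a \<Rightarrow> real" and \<phi> :: "('d \<Rightarrow> real) \<Rightarrow> real"
  assumes "prob_space M"
    and Y: "\<And>l. Y l \<in> borel_measurable M" and X: "\<And>l. X l \<in> borel_measurable M"
    and distr_eq: "\<And>l. distr M borel (Y l) = distr M borel (X l)"
    and single: "AE \<omega> in M. single_deviation c (\<lambda>l. Y l \<omega>)"
    and comparable: "AE \<omega> in M. c \<le> (\<lambda>l. X l \<omega>) \<or> (\<lambda>l. X l \<omega>) \<le> c"
    and sm: "supermodular \<phi>" and \<phi>: "\<phi> \<in> borel_measurable borel"
    and well_defined: "exp_well_defined M (\<lambda>\<omega>. \<phi> (\<lambda>l. Y l \<omega>))"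
  shows "ext_expectation M (\<lambda>\<omega>. \<phi> (\<lambda>l. Y l \<omega>)) \<le> ext_expectation M (\<lambda>\<omega>. \<phi> (\<lambda>l. X l \<omega>))"
proof (cases "(\<integral>\<^sup>+\<omega>. ennreal (max (- \<phi> (\<lambda>l. Y l \<omega>)) 0) \<partial>M) = \<infinity>")
  case True
  then show ?thesis
    using ext_expectation_eq_MInf[OF well_defined] by simp
next
  case False
  define u where "u l t = \<phi> (c(l := t)) - \<phi> c" for l t
  have u: "u l \<in> borel_measurable borel" for l
    unfolding u_def using measurable_compose[OF borel_measurable_fun_upd \<phi>] by simp
  have fin: "(\<integral>\<^sup>+\<omega>. ennreal (max (- u l (Y l \<omega>)) 0) \<partial>M) < \<infinity>" for l
    unfolding u_def using nn_integral_neg_increment_finite[OF \<open>prob_space M\<close> Y \<phi> single] False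
    by (simp add: less_top)
  have "AE \<omega> in M. \<phi> c + (\<Sum>l\<in>UNIV. u l (Y l \<omega>)) = \<phi> (\<lambda>l. Y l \<omega>)"
    using single by eventually_elim (unfold u_def, rule single_deviation_increments(1))
  then have "ext_expectation M (\<lambda>\<omega>. \<phi> (\<lambda>l. Y l \<omega>)) = ext_expectation M (\<lambda>\<omega>. \<phi> c + (\<Sum>l\<in>UNIV. u l (Y l \<omega>)))"
    by (rule ext_expectation_cong_AE[symmetric])
  also have "\<dots> = ext_expectation M (\<lambda>\<omega>. \<phi> c + (\<Sum>l\<in>UNIV. u l (X l \<omega>)))"
    by (rule ext_expectation_offset_sum_distr_eq[OF \<open>prob_space M\<close> finite_class.finite_UNIV Y X distr_eq u fin])
  also have "\<dots> \<le> ext_expectation M (\<lambda>\<omega>. \<phi> (\<lambda>l. X l \<omega>))"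
    using comparable by (intro ext_expectation_mono_AE, eventually_elim)
      (use supermodular_sum_increments_le[OF sm _ finite_class.finite_UNIV] in \<open>simp add: u_def\<close>)
  finally show ?thesis .
qed

lemma sm_le_if_single_deviation:
  fixes X Y :: "'d::finite \<Rightarrow> 'a \<Rightarrow> real"
  assumes "prob_space M"
    and "\<And>l. Y l \<in> borel_measurable M" and "\<And>l. X l \<in> borel_measurable M"
    and "\<And>l. distr M borel (Y l) = distr M borel (X l)"
    and "AE \<omega> in M. single_deviation c (\<lambda>l. Y l \<omega>)"
    and "AE \<omega> in M. c \<le> (\<lambda>l. X l \<omega>) \<or> (\<lambda>l. X l \<omega>) \<le> c"
  shows "sm_le M Y X"
  unfolding sm_le_def using supermodular_ext_expectation_le[OF assms] by blast

definition counter_ordered :: "('d \<Rightarrow> real) set \<Rightarrow> bool" where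
  "counter_ordered R \<longleftrightarrow> (\<forall>p\<in>R. \<forall>q\<in>R. \<forall>i j. i \<noteq> j \<longrightarrow> (p i - q i) * (p j - q j) \<le> 0)"

lemma single_deviation_uminus:
  fixes c x :: "'d \<Rightarrow> 'b::group_add"
  shows "single_deviation (- c) (- x) \<longleftrightarrow> single_deviation c x"
  unfolding single_deviation_def fun_eq_iff by (auto simp: minus_equation_iff)

lemma counter_ordered_uminus: "counter_ordered R \<Longrightarrow> counter_ordered (uminus ` R)"
  unfolding counter_ordered_def by force

lemma counter_ordered_opposite:
  assumes "counter_ordered R" "p \<in> R" "q \<in> R" "p i < q i" "j \<noteq> i"
  shows "q j \<le> p j"
proof (rule ccontr)
  assume "\<not> q j \<le> p j"
  with \<open>p i < q i\<close> have "0 < (p i - q i) * (p j - q j)"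
    by (simp add: mult_neg_neg)
  moreover have "(p i - q i) * (p j - q j) \<le> 0"
    using assms(1-3) \<open>j \<noteq> i\<close> unfolding counter_ordered_def by auto
  ultimately show False
    by simp
qed

lemma card_ge_3_ex_other:
  assumes "3 \<le> card K"
  shows "\<exists>m\<in>K. m \<noteq> l \<and> m \<noteq> n"
proof (rule ccontr)
  assume "\<not> ?thesis"
  then have "card K \<le> card {l, n}"
    by (intro card_mono) auto
  also have "\<dots> \<le> 2"
    by (cases "l = n") auto
  finally show False
    using assms by simp
qed

lemma two_coordinate_difference:
  assumes "a \<noteq> b" and "\<exists>p\<in>R. \<exists>q\<in>R. p a \<noteq> q a" and "\<exists>p\<in>R. \<exists>q\<in>R. p b \<noteq> q b"
  shows "\<exists>p\<in>R. \<exists>q\<in>R. \<exists>l n. l \<noteq> n \<and> p l \<noteq> q l \<and> p n \<noteq> q n"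
proof -
  obtain p q where pq: "p \<in> R" "q \<in> R" "p a \<noteq> q a"
    using assms(2) by blast
  show ?thesis
  proof (cases "\<exists>l. l \<noteq> a \<and> p l \<noteq> q l")
    case True
    with pq show ?thesis by blast
  next
    case p_q_off_a: False
    obtain r where r: "r \<in> R" "r b \<noteq> p b"
      using assms(3) by (metis (mono_tags))
    show ?thesis
    proof (cases "\<exists>l. l \<noteq> b \<and> r l \<noteq> p l")
      case True
      with pq r show ?thesis by blast
    next
      case False
      then have "r a \<noteq> q a" "r b \<noteq> q b"
        using p_q_off_a pq(3) r(2) \<open>a \<noteq> b\<close> by auto
      with pq r \<open>a \<noteq> b\<close> show ?thesis by blast
    qed
  qed
qed

lemma counter_ordered_opposite_pair:
  assumes R: "counter_ordered R" and "a \<noteq> b"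
    and "\<exists>p\<in>R. \<exists>q\<in>R. p a \<noteq> q a" and "\<exists>p\<in>R. \<exists>q\<in>R. p b \<noteq> q b"
  obtains p q i j where "p \<in> R" "q \<in> R" "i \<noteq> j" "p i < q i" "q j < p j"
proof -
  obtain p q l n where pq: "p \<in> R" "q \<in> R" "l \<noteq> n" "p l \<noteq> q l" "p n \<noteq> q n"
    using two_coordinate_difference[OF assms(2-4)] by blast
  show ?thesis
  proof (cases "p l < q l")
    case True
    then have "q n < p n"
      using counter_ordered_opposite[OF R pq(1,2) True] pq(3,5) by fastforce
    with that pq True show ?thesis by blast
  next
    case False
    then have "q l < p l"
      using pq(4) by simp
    then have "p n < q n"
      using counter_ordered_opposite[OF R pq(2,1)] pq(3,5) by fastforce
    with that pq \<open>q l < p l\<close> show ?thesis by blast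
  qed
qed

lemma counter_ordered_above_at_most_one:
  assumes R: "counter_ordered R" and K: "3 \<le> card K"
    and up: "\<And>m. m \<in> K \<Longrightarrow> \<exists>t > c m. c(m := t) \<in> R"
    and s: "s \<in> R" and "l \<noteq> n" "c l < s l"
  shows "s n \<le> c n"
proof -
  obtain m where "m \<in> K" "m \<noteq> l" "m \<noteq> n"
    using card_ge_3_ex_other[OF K] by blast
  then obtain t where "c(m := t) \<in> R"
    using up by blast
  then show ?thesis
    using counter_ordered_opposite[OF R _ s, of "c(m := t)" l n] assms(5,6) \<open>m \<noteq> l\<close> \<open>m \<noteq> n\<close> by simp
qed

lemma counter_ordered_above_three_directions:
  assumes R: "counter_ordered R" and K: "3 \<le> card K"
    and up: "\<And>m. m \<in> K \<Longrightarrow> \<exists>t > c m. c(m := t) \<in> R"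
    and s: "s \<in> R"
  shows "c \<le> s \<and> single_deviation c s"
proof -
  have at_most_one: "s n \<le> c n" if "l \<noteq> n" "c l < s l" for l n
    by (rule counter_ordered_above_at_most_one[OF R K up s that])
  have ge: "c l \<le> s l" for l
  proof (rule ccontr)
    assume "\<not> c l \<le> s l"
    have above: "c m < s m" if "m \<in> K" "m \<noteq> l" for m
    proof -
      obtain t where "c m < t" "c(m := t) \<in> R"
        using up \<open>m \<in> K\<close> by blast
      moreover have "t \<le> s m"
        using counter_ordered_opposite[OF R s \<open>c(m := t) \<in> R\<close>, of l m] \<open>\<not> c l \<le> s l\<close> that by simp
      ultimately show ?thesis by simp
    qed
    obtain m1 m2 where "m1 \<in> K" "m1 \<noteq> l" "m2 \<in> K" "m2 \<noteq> l" "m2 \<noteq> m1"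
      using card_ge_3_ex_other[OF K, of l l] card_ge_3_ex_other[OF K, of l] by blast
    then show False
      using at_most_one[of m1 m2] above[of m1] above[of m2] by simp
  qed
  have "single_deviation c s"
  proof (cases "s = c")
    case True
    then show ?thesis
      unfolding single_deviation_def by auto
  next
    case False
    then obtain i where "c i < s i"
      using ge by (metis antisym_conv1 ext)
    then have "s l = c l" if "l \<noteq> i" for l
      using at_most_one[OF that[symmetric]] ge[of l] by simp
    then show ?thesis
      unfolding single_deviation_def fun_eq_iff by auto
  qed
  with ge show ?thesis
    by (simp add: le_fun_def)
qed

lemma counter_ordered_agree_off_pair:
  assumes R: "counter_ordered R" and "p \<in> R" "q \<in> R" "p i < q i" "q j < p j" "l \<noteq> i" "l \<noteq> j"
  shows "p l = q l"
  using counter_ordered_opposite[OF R assms(2,3,4), of l] counter_ordered_opposite[OF R assms(3,2,5), of l]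
    assms(6,7) by simp

lemma counter_ordered_third_direction:
  assumes R: "counter_ordered R" and pqr: "p \<in> R" "q \<in> R" "r \<in> R"
    and ijk: "i \<noteq> j" "k \<noteq> i" "k \<noteq> j"
    and "p i < q i" "q j < p j" "p k < r k"
  shows "(p(j := q j))(k := r k) = r"
proof -
  have "q k < r k"
    using counter_ordered_agree_off_pair[OF R pqr(1,2) \<open>p i < q i\<close> \<open>q j < p j\<close>] ijk \<open>p k < r k\<close> by simp
  have r_le_p: "r l \<le> p l" and r_le_q: "r l \<le> q l" if "l \<noteq> k" for l
    using counter_ordered_opposite[OF R pqr(1,3) \<open>p k < r k\<close>, of l]
      counter_ordered_opposite[OF R pqr(2,3) \<open>q k < r k\<close>, of l] that by simp_all
  have "r j < p j"
    using r_le_q[of j] ijk \<open>q j < p j\<close> by simp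
  then have p_le_r: "p l \<le> r l" if "l \<noteq> j" for l
    using counter_ordered_opposite[OF R pqr(3,1)] that by simp
  have "r i < q i"
    using r_le_p[of i] ijk \<open>p i < q i\<close> by simp
  then have q_le_r: "q l \<le> r l" if "l \<noteq> i" for l
    using counter_ordered_opposite[OF R pqr(3,2)] that by simp
  show ?thesis
    unfolding fun_eq_iff using ijk r_le_p r_le_q p_le_r q_le_r by (auto intro: order.antisym)
qed

lemma counter_ordered_structure_above:
  assumes R: "counter_ordered R" and pqr: "p \<in> R" "q \<in> R" "r \<in> R"
    and ijk: "i \<noteq> j" "k \<noteq> i" "k \<noteq> j"
    and "p i < q i" "q j < p j" "p k < r k"
  shows "\<exists>c. \<forall>s\<in>R. c \<le> s \<and> single_deviation c s"
proof -
  define c where "c = p(j := q j)"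
  have "c(i := q i) = q"
    using counter_ordered_agree_off_pair[OF R pqr(1,2) \<open>p i < q i\<close> \<open>q j < p j\<close>] ijk
    unfolding c_def fun_eq_iff by auto
  moreover have "c(j := p j) = p" "c(k := r k) = r"
    using counter_ordered_third_direction[OF assms] unfolding c_def by simp_all
  moreover have "c i < q i" "c j < p j" "c k < r k"
    unfolding c_def using ijk \<open>p i < q i\<close> \<open>q j < p j\<close> \<open>p k < r k\<close> by auto
  ultimately have "\<exists>t > c m. c(m := t) \<in> R" if "m \<in> {i, j, k}" for m
    using that pqr by (elim insertE emptyE) auto
  moreover have "card {i, j, k} = 3"
    using ijk by auto
  ultimately show ?thesis
    using counter_ordered_above_three_directions[OF R, of "{i, j, k}"] by auto
qed

lemma counter_ordered_structure_below:
  assumes R: "counter_ordered R" and pqr: "p \<in> R" "q \<in> R" "r \<in> R"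
    and ijk: "i \<noteq> j" "k \<noteq> i" "k \<noteq> j"
    and "p i < q i" "q j < p j" "r k < p k"
  shows "\<exists>c. \<forall>s\<in>R. s \<le> c \<and> single_deviation c s"
proof -
  have "\<exists>c. \<forall>s\<in>uminus ` R. c \<le> s \<and> single_deviation c s"
    by (rule counter_ordered_structure_above[OF counter_ordered_uminus[OF R], of "- p" "- q" "- r" j i k])
      (use assms in auto)
  then obtain c where c: "\<And>s. s \<in> R \<Longrightarrow> c \<le> - s \<and> single_deviation c (- s)"
    by blast
  have "s \<le> - c \<and> single_deviation (- c) s" if "s \<in> R" for s
    using c[OF that] single_deviation_uminus[of "- c" s] by (simp add: le_fun_def le_minus_iff fun_Compl_def)
  then show ?thesis
    by blast
qed

lemma counter_ordered_structure:
  assumes R: "counter_ordered R" and K: "3 \<le> card {m. \<exists>p\<in>R. \<exists>q\<in>R. p m \<noteq> q m}"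
  shows "\<exists>c. (\<forall>s\<in>R. single_deviation c s) \<and> ((\<forall>s\<in>R. c \<le> s) \<or> (\<forall>s\<in>R. s \<le> c))"
proof -
  define NC where "NC = {m. \<exists>p\<in>R. \<exists>q\<in>R. p m \<noteq> q m}"
  obtain a b where "a \<in> NC" "b \<in> NC" "a \<noteq> b"
    using card_ge_3_ex_other[OF K[folded NC_def], of undefined undefined]
      card_ge_3_ex_other[OF K[folded NC_def], of _ undefined] by blast
  then obtain p q i j where pq: "p \<in> R" "q \<in> R" "i \<noteq> j" "p i < q i" "q j < p j"
    using counter_ordered_opposite_pair[OF R] unfolding NC_def by blast
  obtain k where "k \<in> NC" "k \<noteq> i" "k \<noteq> j"
    using card_ge_3_ex_other[OF K[folded NC_def]] by blast
  then obtain p' q' where "p' \<in> R" "q' \<in> R" "p' k \<noteq> q' k"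
    unfolding NC_def by blast
  then obtain r where r: "r \<in> R" "r k \<noteq> p k"
    by (cases "p' k = p k") auto
  then consider "p k < r k" | "r k < p k"
    by fastforce
  then show ?thesis
  proof cases
    case 1
    then show ?thesis
      using counter_ordered_structure_above[OF R pq(1,2) r(1) pq(3) \<open>k \<noteq> i\<close> \<open>k \<noteq> j\<close> pq(4,5)] by blast
  next
    case 2
    then show ?thesis
      using counter_ordered_structure_below[OF R pq(1,2) r(1) pq(3) \<open>k \<noteq> i\<close> \<open>k \<noteq> j\<close> pq(4,5)] by blast
  qed
qed
lemma mono_diff_mult_nonneg:
  fixes f g :: "real \<Rightarrow> real"
  assumes "mono f" "mono g"
  shows "0 \<le> (f x - f y) * (g x - g y)"
proof (cases "x \<le> y")
  case True
  then have "f x \<le> f y" "g x \<le> g y"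
    using assms by (simp_all add: monoD)
  then show ?thesis
    by (intro mult_nonpos_nonpos) simp_all
next
  case False
  then have "f y \<le> f x" "g y \<le> g x"
    using assms by (simp_all add: monoD)
  then show ?thesis
    by (intro mult_nonneg_nonneg) simp_all
qed

lemma counter_monotonic_pair_AE_counter_ordered:
  assumes "counter_monotonic_pair M U V"
  obtains \<Omega> where "AE \<omega> in M. \<omega> \<in> \<Omega>" "\<forall>\<omega>\<in>\<Omega>. \<forall>\<omega>'\<in>\<Omega>. (U \<omega> - U \<omega>') * (V \<omega> - V \<omega>') \<le> 0"
proof -
  obtain Z :: "'a \<Rightarrow> real" and f g :: "real \<Rightarrow> real"
    where "mono f" "mono g" and AE: "AE \<omega> in M. U \<omega> = f (Z \<omega>) \<and> - V \<omega> = g (Z \<omega>)"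
    using assms unfolding counter_monotonic_pair_def comonotonic_def by blast
  define \<Omega> where "\<Omega> = {\<omega>. U \<omega> = f (Z \<omega>) \<and> V \<omega> = - g (Z \<omega>)}"
  have "(U \<omega> - U \<omega>') * (V \<omega> - V \<omega>') \<le> 0" if "\<omega> \<in> \<Omega>" "\<omega>' \<in> \<Omega>" for \<omega> \<omega>'
    using mono_diff_mult_nonneg[OF \<open>mono f\<close> \<open>mono g\<close>, of "Z \<omega>" "Z \<omega>'"] that
    unfolding \<Omega>_def by (simp add: algebra_simps)
  moreover have "AE \<omega> in M. \<omega> \<in> \<Omega>"
    using AE by eventually_elim (auto simp: \<Omega>_def minus_equation_iff)
  ultimately show ?thesis
    using that by blast
qed

lemma counter_monotonic_AE_counter_ordered:
  fixes Y :: "'d::finite \<Rightarrow> 'a \<Rightarrow> real"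
  assumes "counter_monotonic M Y"
  obtains \<Omega> where "AE \<omega> in M. \<omega> \<in> \<Omega>" "counter_ordered ((\<lambda>\<omega> l. Y l \<omega>) ` \<Omega>)"
proof -
  have "\<forall>i j. \<exists>\<Omega>. i \<noteq> j \<longrightarrow> (AE \<omega> in M. \<omega> \<in> \<Omega>) \<and>
      (\<forall>\<omega>\<in>\<Omega>. \<forall>\<omega>'\<in>\<Omega>. (Y i \<omega> - Y i \<omega>') * (Y j \<omega> - Y j \<omega>') \<le> 0)"
    using assms counter_monotonic_pair_AE_counter_ordered unfolding counter_monotonic_def by metis
  then obtain \<Omega>2 where \<Omega>2: "\<And>i j. i \<noteq> j \<Longrightarrow> (AE \<omega> in M. \<omega> \<in> \<Omega>2 i j) \<and>
      (\<forall>\<omega>\<in>\<Omega>2 i j. \<forall>\<omega>'\<in>\<Omega>2 i j. (Y i \<omega> - Y i \<omega>') * (Y j \<omega> - Y j \<omega>') \<le> 0)"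
    by metis
  define \<Omega> where "\<Omega> = {\<omega>. \<forall>i j. i \<noteq> j \<longrightarrow> \<omega> \<in> \<Omega>2 i j}"
  have "AE \<omega> in M. \<omega> \<in> \<Omega>"
    unfolding \<Omega>_def using \<Omega>2 by (auto intro!: eventually_all_finite)
  moreover have "counter_ordered ((\<lambda>\<omega> l. Y l \<omega>) ` \<Omega>)"
    unfolding counter_ordered_def \<Omega>_def using \<Omega>2 by blast
  ultimately show ?thesis
    using that by blast
qed

lemma AE_transfer_distr_eq:
  assumes "Y \<in> borel_measurable M" "X \<in> borel_measurable M"
    and "distr M borel Y = distr M borel X"
    and "{x \<in> space borel. P x} \<in> sets borel" and "AE \<omega> in M. P (Y \<omega>)"
  shows "AE \<omega> in M. P (X \<omega>)"
proof -
  have "AE x in distr M borel Y. P x"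
    using AE_distr_iff assms(1,4,5) by blast
  then have "AE x in distr M borel X. P x"
    unfolding assms(3) .
  then show ?thesis
    using AE_distr_iff assms(2,4) by blast
qed

lemma nondegenerate_distr_eq:
  assumes "Y \<in> borel_measurable M" "X \<in> borel_measurable M"
    and "distr M borel Y = distr M borel X"
  shows "nondegenerate M Y \<longleftrightarrow> nondegenerate M X"
proof -
  have "AE \<omega> in M. X \<omega> = c" if "AE \<omega> in M. Y \<omega> = c" for c
    using AE_transfer_distr_eq[OF assms, of "\<lambda>x. x = c"] that by simp
  moreover have "AE \<omega> in M. Y \<omega> = c" if "AE \<omega> in M. X \<omega> = c" for c
    using AE_transfer_distr_eq[OF assms(2,1) assms(3)[symmetric], of "\<lambda>x. x = c"] that by simp
  ultimately show ?thesis
    unfolding nondegenerate_def by blast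
qed

lemma AE_bounds_transfer_distr_eq:
  fixes X Y :: "'d::finite \<Rightarrow> 'a \<Rightarrow> real"
  assumes Y: "\<And>l. Y l \<in> borel_measurable M" and X: "\<And>l. X l \<in> borel_measurable M"
    and distr_eq: "\<And>l. distr M borel (Y l) = distr M borel (X l)"
  shows "(AE \<omega> in M. c \<le> (\<lambda>l. Y l \<omega>)) \<Longrightarrow> AE \<omega> in M. c \<le> (\<lambda>l. X l \<omega>)"
    and "(AE \<omega> in M. (\<lambda>l. Y l \<omega>) \<le> c) \<Longrightarrow> AE \<omega> in M. (\<lambda>l. X l \<omega>) \<le> c"
proof -
  assume "AE \<omega> in M. c \<le> (\<lambda>l. Y l \<omega>)"
  then have "AE \<omega> in M. c l \<le> Y l \<omega>" for l
    by eventually_elim (simp add: le_fun_def)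
  then have "AE \<omega> in M. c l \<le> X l \<omega>" for l
    by (rule AE_transfer_distr_eq[OF Y X distr_eq, rotated]) simp
  then have "AE \<omega> in M. \<forall>l. c l \<le> X l \<omega>"
    by (rule eventually_all_finite)
  then show "AE \<omega> in M. c \<le> (\<lambda>l. X l \<omega>)"
    by (simp add: le_fun_def)
next
  assume "AE \<omega> in M. (\<lambda>l. Y l \<omega>) \<le> c"
  then have "AE \<omega> in M. Y l \<omega> \<le> c l" for l
    by eventually_elim (simp add: le_fun_def)
  then have "AE \<omega> in M. X l \<omega> \<le> c l" for l
    by (rule AE_transfer_distr_eq[OF Y X distr_eq, rotated]) simp
  then have "AE \<omega> in M. \<forall>l. X l \<omega> \<le> c l"
    by (rule eventually_all_finite)
  then show "AE \<omega> in M. (\<lambda>l. X l \<omega>) \<le> c"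
    by (simp add: le_fun_def)
qed

lemma nondegenerate_imp_nonconstant:
  assumes "prob_space M" "AE \<omega> in M. \<omega> \<in> \<Omega>" "nondegenerate M V"
  shows "\<exists>\<omega>\<in>\<Omega>. \<exists>\<omega>'\<in>\<Omega>. V \<omega> \<noteq> V \<omega>'"
proof (rule ccontr)
  assume same_value: "\<not> ?thesis"
  have "\<Omega> \<noteq> {}"
  proof
    assume "\<Omega> = {}"
    with assms(2) have "AE \<omega> in M. False"
      by simp
    with prob_space.AE_False[OF assms(1)] show False
      by simp
  qed
  then obtain \<omega>0 where "\<omega>0 \<in> \<Omega>"
    by blast
  from assms(2) have "AE \<omega> in M. V \<omega> = V \<omega>0"
    by eventually_elim (use same_value \<open>\<omega>0 \<in> \<Omega>\<close> in blast)
  with assms(3) show False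
    unfolding nondegenerate_def by blast
qed

lemma card_nondegenerate_le_card_nonconstant:
  fixes X Y :: "'d::finite \<Rightarrow> 'a \<Rightarrow> real"
  assumes "prob_space M"
    and Y: "\<And>l. Y l \<in> borel_measurable M" and X: "\<And>l. X l \<in> borel_measurable M"
    and distr_eq: "\<And>l. distr M borel (Y l) = distr M borel (X l)"
    and \<Omega>: "AE \<omega> in M. \<omega> \<in> \<Omega>"
  shows "card {i. nondegenerate M (X i)} \<le> card {m. \<exists>p\<in>(\<lambda>\<omega> l. Y l \<omega>) ` \<Omega>. \<exists>q\<in>(\<lambda>\<omega> l. Y l \<omega>) ` \<Omega>. p m \<noteq> q m}"
proof (rule card_mono)
  show "{i. nondegenerate M (X i)} \<subseteq> {m. \<exists>p\<in>(\<lambda>\<omega> l. Y l \<omega>) ` \<Omega>. \<exists>q\<in>(\<lambda>\<omega> l. Y l \<omega>) ` \<Omega>. p m \<noteq> q m}"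
  proof
    fix m
    assume "m \<in> {i. nondegenerate M (X i)}"
    then have "nondegenerate M (Y m)"
      using nondegenerate_distr_eq[OF Y X distr_eq] by simp
    then obtain \<omega> \<omega>' where "\<omega> \<in> \<Omega>" "\<omega>' \<in> \<Omega>" "Y m \<omega> \<noteq> Y m \<omega>'"
      using nondegenerate_imp_nonconstant[OF \<open>prob_space M\<close> \<Omega>] by blast
    then show "m \<in> {m. \<exists>p\<in>(\<lambda>\<omega> l. Y l \<omega>) ` \<Omega>. \<exists>q\<in>(\<lambda>\<omega> l. Y l \<omega>) ` \<Omega>. p m \<noteq> q m}"
      by auto
  qed
qed simp

lemma counter_ordered_AE_single_deviation:
  fixes X Y :: "'d::finite \<Rightarrow> 'a \<Rightarrow> real"
  assumes "prob_space M"
    and Y: "\<And>l. Y l \<in> borel_measurable M" and X: "\<And>l. X l \<in> borel_measurable M"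
    and distr_eq: "\<And>l. distr M borel (Y l) = distr M borel (X l)"
    and \<Omega>: "AE \<omega> in M. \<omega> \<in> \<Omega>" and counter: "counter_ordered ((\<lambda>\<omega> l. Y l \<omega>) ` \<Omega>)"
    and nondegenerate: "3 \<le> card {i. nondegenerate M (X i)}"
  obtains c where "AE \<omega> in M. single_deviation c (\<lambda>l. Y l \<omega>)"
    and "AE \<omega> in M. c \<le> (\<lambda>l. X l \<omega>) \<or> (\<lambda>l. X l \<omega>) \<le> c"
proof -
  define R where "R = (\<lambda>\<omega> l. Y l \<omega>) ` \<Omega>"
  obtain c where c: "\<forall>s\<in>R. single_deviation c s" and side: "(\<forall>s\<in>R. c \<le> s) \<or> (\<forall>s\<in>R. s \<le> c)"
    using counter_ordered_structure[OF counter] nondegenerate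
      card_nondegenerate_le_card_nonconstant[of M Y X, OF assms(1-5)]
    unfolding R_def by fastforce
  have "AE \<omega> in M. single_deviation c (\<lambda>l. Y l \<omega>)"
    using \<Omega> by eventually_elim (use c in \<open>simp add: R_def\<close>)
  moreover from side have "AE \<omega> in M. c \<le> (\<lambda>l. X l \<omega>) \<or> (\<lambda>l. X l \<omega>) \<le> c"
  proof
    assume above: "\<forall>s\<in>R. c \<le> s"
    from \<Omega> have "AE \<omega> in M. c \<le> (\<lambda>l. Y l \<omega>)"
      by eventually_elim (use above in \<open>simp add: R_def\<close>)
    then have "AE \<omega> in M. c \<le> (\<lambda>l. X l \<omega>)"
      by (rule AE_bounds_transfer_distr_eq(1)[OF Y X distr_eq])
    then show ?thesis
      by (auto elim: eventually_mono)
  next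
    assume below: "\<forall>s\<in>R. s \<le> c"
    from \<Omega> have "AE \<omega> in M. (\<lambda>l. Y l \<omega>) \<le> c"
      by eventually_elim (use below in \<open>simp add: R_def\<close>)
    then have "AE \<omega> in M. (\<lambda>l. X l \<omega>) \<le> c"
      by (rule AE_bounds_transfer_distr_eq(2)[OF Y X distr_eq])
    then show ?thesis
      by (auto elim: eventually_mono)
  qed
  ultimately show ?thesis
    by (rule that)
qed

theorem theorem7:
  fixes M :: "'a measure" and X Xct :: "'d::finite \<Rightarrow> 'a \<Rightarrow> real"
  assumes "prob_space M" and "atomless M"
    and "CARD('d) \<ge> 3"
    and "\<And>i. X i \<in> borel_measurable M"
    and "card {i. nondegenerate M (X i)} \<ge> 3"
    and "counter_monotonic_version M Xct X"
  shows "sm_le M Xct X"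
proof -
  have Xct: "\<And>i. Xct i \<in> borel_measurable M" and counter: "counter_monotonic M Xct"
    and distr_eq: "\<And>i. distr M borel (Xct i) = distr M borel (X i)"
    using assms(6) unfolding counter_monotonic_version_def by auto
  from counter obtain \<Omega> where "AE \<omega> in M. \<omega> \<in> \<Omega>" and "counter_ordered ((\<lambda>\<omega> l. Xct l \<omega>) ` \<Omega>)"
    by (rule counter_monotonic_AE_counter_ordered)
  then obtain c where "AE \<omega> in M. single_deviation c (\<lambda>l. Xct l \<omega>)"
    and "AE \<omega> in M. c \<le> (\<lambda>l. X l \<omega>) \<or> (\<lambda>l. X l \<omega>) \<le> c"
    using counter_ordered_AE_single_deviation[OF assms(1) Xct assms(4) distr_eq _ _ assms(5)] by blast
  then show ?thesis
    by (rule sm_le_if_single_deviation[OF assms(1) Xct assms(4) distr_eq])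
qed

end
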